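(* Let $n\ge1$ and let $q:\Delta_n\to C_n(S^1)$ be $q(w_1,\dots,w_n)=\{w_1\bmod 1,\dots,w_n\bmod 1\}$. If $\sigma,\sigma'$ are two faces of $\Delta_n$ with the same number of vertices which are both extremal, then $q(\sigma)=q(\sigma')$; and if they are both non-extremal, then $q(\sigma)=q(\sigma')$.
   Context: $S^1=[0,1]/(0\sim1)=\mathbb{R}/\mathbb{Z}$. $C_n(S^1)$ is the set of nonempty subsets of $S^1$ with at most $n$ elements, topologized as a quotient of $(S^1)^n$ via $(x_1,\dots,x_n)\mapsto\{x_1,\dots,x_n\}$. $\Delta_n\subset\mathbb{R}^n$ is the $n$-simplex with vertices $b_0=0$ and $b_k=e_1+\dots+e_k$ for $1\le k\le n$ ($e_i$ the standard basis vectors). A face of $\Delta_n$ is extremal if its vertex set contains both $b_0$ and $b_n$, and non-extremal otherwise. *)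

theory Defs
  imports Complex_Main
begin

text \<open>Points of R^n are modelled as functions nat => real, coordinates indexed 1..n.
  The circle S^1 = R/Z is represented by the fundamental domain [0,1) via frac,
  so a point of C_n(S^1) is a nonempty subset of [0,1) with at most n elements.\<close>

definition simplex_vertex :: "nat \<Rightarrow> (nat \<Rightarrow> real)" where
  "simplex_vertex k = (\<lambda>i. if 1 \<le> i \<and> i \<le> k then 1 else 0)"

definition is_face :: "nat \<Rightarrow> nat set \<Rightarrow> bool" where
  "is_face n V \<longleftrightarrow> V \<subseteq> {0..n} \<and> V \<noteq> {}"

definition face_points :: "nat set \<Rightarrow> (nat \<Rightarrow> real) set" where
  "face_points V = {w. \<exists>t::nat \<Rightarrow> real. (\<forall>k\<in>V. 0 \<le> t k) \<and> (\<Sum>k\<in>V. t k) = 1 \<and>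
                        w = (\<lambda>i. \<Sum>k\<in>V. t k * simplex_vertex k i)}"

definition extremal :: "nat \<Rightarrow> nat set \<Rightarrow> bool" where
  "extremal n V \<longleftrightarrow> 0 \<in> V \<and> n \<in> V"

definition qmap :: "nat \<Rightarrow> (nat \<Rightarrow> real) \<Rightarrow> real set" where
  "qmap n w = (\<lambda>i. frac (w i)) ` {1..n}"

end

theory Submission imports Defs begin

text \<open>If a point w of the face V has barycentric weights t, then w_i is the sum of the t_k over the
  vertices b_k with k \<ge> i. So the coordinates of w are the values of the tail-sum function g on
  V - {0}, plus 0 when b_n is not a vertex, and the possible g are exactly the antitone nonnegative
  functions on V with value 1 at min V. Reducing mod 1 identifies 1 with 0. An extremal face
  therefore yields exactly the nonempty subsets of [0,1) with at most |V| - 1 elements, and a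
  non-extremal face exactly the subsets of [0,1) containing 0 with at most |V| elements: in both
  cases only |V| matters.\<close>

definition tail_sum :: "(nat \<Rightarrow> real) \<Rightarrow> nat set \<Rightarrow> nat \<Rightarrow> real" where
  "tail_sum t V k = (\<Sum>k'\<in>{k'\<in>V. k \<le> k'}. t k')"

lemma tail_sum_Min:
  assumes "finite V" "V \<noteq> {}"
  shows "tail_sum t V (Min V) = sum t V"
proof -
  have "{k\<in>V. Min V \<le> k} = V" using assms by auto
  then show ?thesis unfolding tail_sum_def by simp
qed

lemma antimono_on_tail_sum:
  assumes "finite V" "\<forall>k\<in>V. 0 \<le> t k"
  shows "antimono_on V (tail_sum t V)"
  unfolding monotone_on_def tail_sum_def
  using assms by (auto intro!: sum_mono2)

lemma convex_comb_coord:
  assumes "finite V" "1 \<le> i"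
  shows "(\<Sum>k\<in>V. t k * simplex_vertex k i) = tail_sum t V i"
  using assms unfolding tail_sum_def simplex_vertex_def
  by (simp add: sum.inter_filter if_distrib cong: if_cong)

lemma tail_sum_empty:
  assumes "\<forall>k\<in>V. k < i"
  shows "tail_sum t V i = 0"
proof -
  have "{k\<in>V. i \<le> k} = {}" using assms by (auto simp: not_le)
  then show ?thesis unfolding tail_sum_def by (simp only: sum.empty)
qed

text \<open>tail_sum t V i only depends on the least vertex index k \<ge> i, and vanishes if there is none.\<close>

lemma tail_sum_image:
  assumes "V \<subseteq> {0..n}" "1 \<le> n"
  shows "tail_sum t V ` {1..n} = tail_sum t V ` (V - {0}) \<union> (if n \<in> V then {} else {0})"
proof (intro equalityI subsetI)
  have fin: "finite V" using assms(1) finite_subset by blast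
  fix y assume "y \<in> tail_sum t V ` {1..n}"
  then obtain i where i: "i \<in> {1..n}" "y = tail_sum t V i" by auto
  show "y \<in> tail_sum t V ` (V - {0}) \<union> (if n \<in> V then {} else {0})"
  proof (cases "\<exists>k\<in>V. i \<le> k")
    case True
    define m where "m = Min {k\<in>V. i \<le> k}"
    have fm: "finite {k\<in>V. i \<le> k}" using fin by auto
    have m: "m \<in> V" "i \<le> m" using Min_in[OF fm] True unfolding m_def by auto
    have "{k\<in>V. i \<le> k} = {k\<in>V. m \<le> k}"
      using m Min_le[OF fm] unfolding m_def by fastforce
    then have "y = tail_sum t V m" using i unfolding tail_sum_def by simp
    moreover have "m \<in> V - {0}" using m i by auto
    ultimately show ?thesis by blast
  next
    case False
    then show ?thesis using i tail_sum_empty[of V i t] by (auto simp: not_le)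
  qed
next
  fix y assume "y \<in> tail_sum t V ` (V - {0}) \<union> (if n \<in> V then {} else {0})"
  moreover have "tail_sum t V n = 0" if "n \<notin> V"
    using that assms(1) by (intro tail_sum_empty) (metis atLeastAtMost_iff le_neq_implies_less subsetD)
  ultimately show "y \<in> tail_sum t V ` {1..n}"
    using assms by (force split: if_splits)
qed

lemma antimono_on_eq_tail_sum:
  assumes "finite V" "antimono_on V g" "\<forall>k\<in>V. 0 \<le> g k"
  shows "\<exists>t. (\<forall>k\<in>V. 0 \<le> t k) \<and> (\<forall>k\<in>V. tail_sum t V k = g k)"
  using assms
proof (induction V arbitrary: g rule: finite_linorder_max_induct)
  case empty
  then show ?case by simp
next
  case (insert b A)
  have gb: "g b \<le> g a" if "a \<in> A" for a
    using insert.hyps(2) insert.prems(1) that by (auto simp: monotone_on_def)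
  have "antimono_on A (\<lambda>k. g k - g b)"
    using insert.prems(1) by (auto simp: monotone_on_def)
  then obtain t where t: "\<forall>k\<in>A. 0 \<le> t k" "\<forall>k\<in>A. tail_sum t A k = g k - g b"
    using insert.IH gb by fastforce
  define t' where "t' = t(b := g b)"
  have bA: "b \<notin> A" using insert.hyps(2) by blast
  have "tail_sum t' (insert b A) k = g k" if k: "k \<in> insert b A" for k
  proof (cases "k = b")
    case True
    then have "{k'\<in>insert b A. k \<le> k'} = {b}" using insert.hyps(2) by fastforce
    then show ?thesis unfolding tail_sum_def t'_def using True by simp
  next
    case False
    then have kA: "k \<in> A" using k by simp
    then have "{k'\<in>insert b A. k \<le> k'} = insert b {k'\<in>A. k \<le> k'}"
      using insert.hyps(2) by fastforce
    then have "tail_sum t' (insert b A) k = g b + tail_sum t' A k"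
      unfolding tail_sum_def t'_def using bA insert.hyps(1) by simp
    also have "tail_sum t' A k = tail_sum t A k"
      unfolding tail_sum_def t'_def using bA by (intro sum.cong) auto
    finally show ?thesis using t(2) kA by simp
  qed
  moreover have "\<forall>k\<in>insert b A. 0 \<le> t' k" using t(1) insert.prems(2) unfolding t'_def by auto
  ultimately show ?case by blast
qed

text \<open>The largest element of A is sent to Min T; the remaining elements cover T, or T without its
  minimum when card T exceeds card A.\<close>

lemma antimono_on_onto:
  fixes A :: "'a::linorder set" and T :: "'b::linorder set"
  assumes "finite A" "A \<noteq> {}" "finite T" "T \<noteq> {}" "card T \<le> card A"
  shows "\<exists>g. antimono_on A g \<and> g ` A = T"
  using assms
proof (induction A arbitrary: T rule: finite_linorder_max_induct)
  case empty
  then show ?case by simp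
next
  case (insert b A)
  have bA: "b \<notin> A" using insert.hyps(2) by blast
  show ?case
  proof (cases "A = {}")
    case True
    then have "card T = 1" using insert.prems by (simp add: le_Suc_eq)
    then obtain x where "T = {x}" by (rule card_1_singletonE)
    then show ?thesis using True by (intro exI[of _ "\<lambda>_. x"]) (auto simp: monotone_on_def)
  next
    case False
    define T' where "T' = (if card T \<le> card A then T else T - {Min T})"
    have MinT: "Min T \<in> T" "\<forall>x\<in>T. Min T \<le> x" using insert.prems(2,3) by auto
    have "card T' = (if card T \<le> card A then card T else card A)"
      using insert.prems insert.hyps(1) bA MinT(1) unfolding T'_def by auto
    moreover have "card A \<noteq> 0" "card T \<noteq> 0" using False insert.hyps(1) insert.prems by auto
    ultimately have "card T' \<noteq> 0" "card T' \<le> card A" by auto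
    then have T': "finite T'" "T' \<noteq> {}" "card T' \<le> card A" "T = insert (Min T) T'"
      using insert.prems(2) MinT(1) unfolding T'_def by (auto simp: insert_absorb)
    obtain g where g: "antimono_on A g" "g ` A = T'"
      using insert.IH[OF False T'(1-3)] by blast
    define g' where "g' = g(b := Min T)"
    have "g' ` A = T'" using g(2) bA unfolding g'_def by (metis fun_upd_image)
    moreover have "g' b = Min T" unfolding g'_def by simp
    ultimately have img: "g' ` insert b A = T" using T'(4) by (simp only: image_insert)
    have "g' c \<le> g' a" if "a \<in> insert b A" "c \<in> insert b A" "a \<le> c" for a c
    proof (cases "c = b")
      case True
      then show ?thesis using img that(1) MinT(2) unfolding g'_def by auto
    next
      case False
      then have "a \<in> A" "c \<in> A" using that insert.hyps(2) by (auto dest: le_less_trans)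
      then show ?thesis using g(1) that(3) bA unfolding g'_def monotone_on_def by auto
    qed
    then show ?thesis using img unfolding monotone_on_def by blast
  qed
qed

definition face_coords :: "nat \<Rightarrow> nat set \<Rightarrow> (nat \<Rightarrow> real) \<Rightarrow> real set" where
  "face_coords n V g = g ` (V - {0}) \<union> (if n \<in> V then {} else {0})"

lemma face_coords_cong: "\<forall>k\<in>V. g k = h k \<Longrightarrow> face_coords n V g = face_coords n V h"
  unfolding face_coords_def by simp

lemma qmap_convex_comb:
  assumes "V \<subseteq> {0..n}" "1 \<le> n"
  shows "qmap n (\<lambda>i. \<Sum>k\<in>V. t k * simplex_vertex k i) = frac ` face_coords n V (tail_sum t V)"
proof -
  have "finite V" using assms(1) finite_subset by blast
  then have "(\<lambda>i. \<Sum>k\<in>V. t k * simplex_vertex k i) ` {1..n} = tail_sum t V ` {1..n}"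
    by (intro image_cong) (auto simp: convex_comb_coord)
  then show ?thesis
    unfolding qmap_def face_coords_def tail_sum_image[OF assms, symmetric]
    by (metis image_image)
qed

definition tail_profiles :: "nat set \<Rightarrow> (nat \<Rightarrow> real) set" where
  "tail_profiles V = {g. antimono_on V g \<and> (\<forall>k\<in>V. 0 \<le> g k) \<and> g (Min V) = 1}"

lemma qmap_face_points:
  assumes "is_face n V" "1 \<le> n"
  shows "qmap n ` face_points V = (\<lambda>g. frac ` face_coords n V g) ` tail_profiles V"
proof -
  have V: "V \<subseteq> {0..n}" "V \<noteq> {}" using assms(1) unfolding is_face_def by auto
  then have fin: "finite V" using finite_subset by blast
  show ?thesis
  proof (intro equalityI subsetI)
      fix T assume "T \<in> qmap n ` face_points V"
      then obtain t where t: "\<forall>k\<in>V. 0 \<le> t k" "sum t V = 1"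
        "T = qmap n (\<lambda>i. \<Sum>k\<in>V. t k * simplex_vertex k i)"
        unfolding face_points_def by blast
      have "antimono_on V (tail_sum t V)" using antimono_on_tail_sum[OF fin t(1)] .
      moreover have "\<forall>k\<in>V. 0 \<le> tail_sum t V k"
        using t(1) unfolding tail_sum_def by (auto intro: sum_nonneg)
      moreover have "tail_sum t V (Min V) = 1" using tail_sum_Min[OF fin V(2)] t(2) by simp
      moreover have "T = frac ` face_coords n V (tail_sum t V)"
        using t(3) qmap_convex_comb[OF V(1) assms(2)] by simp
      ultimately show "T \<in> (\<lambda>g. frac ` face_coords n V g) ` tail_profiles V"
        unfolding tail_profiles_def by blast
    next
      fix T assume "T \<in> (\<lambda>g. frac ` face_coords n V g) ` tail_profiles V"
      then obtain g where g: "antimono_on V g" "\<forall>k\<in>V. 0 \<le> g k" "g (Min V) = 1"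
        "T = frac ` face_coords n V g" unfolding tail_profiles_def by blast
      obtain t where t: "\<forall>k\<in>V. 0 \<le> t k" "\<forall>k\<in>V. tail_sum t V k = g k"
        using antimono_on_eq_tail_sum[OF fin g(1,2)] by blast
      have "sum t V = 1" using tail_sum_Min[OF fin V(2), of t] t(2) g(3) Min_in[OF fin V(2)] by simp
      then have "(\<lambda>i. \<Sum>k\<in>V. t k * simplex_vertex k i) \<in> face_points V"
        using t(1) unfolding face_points_def by blast
      moreover have "T = qmap n (\<lambda>i. \<Sum>k\<in>V. t k * simplex_vertex k i)"
        using g(4) t(2) face_coords_cong[of V "tail_sum t V" g n] qmap_convex_comb[OF V(1) assms(2)] by simp
      ultimately show "T \<in> qmap n ` face_points V" by blast
  qed
qed

lemma fun_upd_0_in_tail_profiles: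
  assumes "finite V" "0 \<in> V" "antimono_on (V - {0}) g" "g ` (V - {0}) \<subseteq> {0..1}"
  shows "g(0 := 1) \<in> tail_profiles V"
proof -
  have "(g(0 := 1)) b \<le> (g(0 := 1)) a" if "a \<in> V" "b \<in> V" "a \<le> b" for a b
  proof (cases "a = 0")
    case True
    then show ?thesis using assms(4) that(2) by fastforce
  next
    case False
    then show ?thesis using assms(3) that unfolding monotone_on_def by auto
  qed
  moreover have "Min V = 0" using assms(1,2) by (simp add: Min_eqI)
  ultimately show ?thesis
    using assms(4) unfolding tail_profiles_def monotone_on_def by fastforce
qed

lemma frac_image_eq: "T \<subseteq> {0..<1} \<Longrightarrow> frac ` T = T"
  by (force simp: frac_eq_id image_iff)

lemma frac_image_between:
  assumes "T \<subseteq> {0..<1}" "0 \<in> T" "T - {0} \<subseteq> S" "S \<subseteq> insert 1 T" "0 \<in> frac ` S"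
  shows "frac ` S = T"
proof (intro equalityI subsetI)
  fix y assume "y \<in> frac ` S"
  then obtain x where x: "x \<in> insert 1 T" "y = frac x" using assms(4) by blast
  then show "y \<in> T"
    using assms(1,2) frac_eq_id[of x] by (cases "x = 1") auto
next
  fix y assume "y \<in> T"
  then show "y \<in> frac ` S"
    using assms(1,3,5) frac_eq_id[of y] by (cases "y = 0") force+
qed

lemma zero_in_frac_face_coords:
  assumes "finite V" "V \<noteq> {}" "\<not> extremal n V" "g (Min V) = 1"
  shows "0 \<in> frac ` face_coords n V g"
proof (cases "n \<in> V")
  case True
  then have "Min V \<in> V - {0}" using assms(1-3) unfolding extremal_def by auto
  then show ?thesis using assms(4) unfolding face_coords_def by force
next
  case False
  then show ?thesis unfolding face_coords_def by simp
qed

lemma qmap_extremal_face: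
  assumes "is_face n V" "1 \<le> n" "extremal n V"
  shows "qmap n ` face_points V = {T. T \<subseteq> {0..<1} \<and> T \<noteq> {} \<and> finite T \<and> card T \<le> card V - 1}"
    (is "_ = ?R")
proof -
  have V: "finite V" "0 \<in> V" "n \<in> V - {0}"
    using assms unfolding is_face_def extremal_def by (auto intro: finite_subset)
  have card_A: "card (V - {0}) = card V - 1" using V by simp
  have coords: "face_coords n V g = g ` (V - {0})" for g
    using V unfolding face_coords_def by simp
  show ?thesis unfolding qmap_face_points[OF assms(1,2)] coords
  proof (intro equalityI subsetI)
    fix T assume "T \<in> (\<lambda>g. frac ` g ` (V - {0})) ` tail_profiles V"
    then obtain g where T: "T = frac ` g ` (V - {0})" by blast
    have "card T \<le> card (V - {0})"
      unfolding T using V(1) by (meson card_image_le finite_Diff finite_imageI le_trans)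
    then show "T \<in> ?R"
      using T V card_A by (auto simp: frac_lt_1)
  next
    fix T :: "real set" assume "T \<in> ?R"
    then have T: "T \<subseteq> {0..<1}" "T \<noteq> {}" "finite T" "card T \<le> card (V - {0})"
      using card_A by auto
    obtain g where g: "antimono_on (V - {0}) g" "g ` (V - {0}) = T"
      using antimono_on_onto[of "V - {0}" T] V T by blast
    have "g(0 := 1) \<in> tail_profiles V"
      using fun_upd_0_in_tail_profiles[OF V(1,2) g(1)] g(2) T(1) by fastforce
    moreover have "frac ` (g(0 := 1)) ` (V - {0}) = T"
      using g(2) frac_image_eq[OF T(1)] by simp
    ultimately show "T \<in> (\<lambda>g. frac ` g ` (V - {0})) ` tail_profiles V"
      by (metis image_eqI)
  qed
qed

lemma qmap_nonextremal_face:
  assumes "is_face n V" "1 \<le> n" "\<not> extremal n V"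
  shows "qmap n ` face_points V = {T. T \<subseteq> {0..<1} \<and> 0 \<in> T \<and> finite T \<and> card T \<le> card V}"
    (is "_ = ?R")
proof -
  have V: "finite V" "V \<noteq> {}" using assms(1) unfolding is_face_def by (auto intro: finite_subset)
  have MinV: "Min V \<in> V" "\<forall>k\<in>V. Min V \<le> k" using V by auto
  show ?thesis unfolding qmap_face_points[OF assms(1,2)]
  proof (intro equalityI subsetI)
    fix T assume "T \<in> (\<lambda>g. frac ` face_coords n V g) ` tail_profiles V"
    then obtain g where g: "g \<in> tail_profiles V" "T = frac ` face_coords n V g" by blast
    have g1: "g (Min V) = 1" using g(1) unfolding tail_profiles_def by simp
    have "frac 0 \<in> frac ` g ` V" using g1 MinV(1) by (metis frac_1 frac_of_int of_int_0 image_eqI)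
    \<comment> \<open>the coordinate 0 contributed when n is not a vertex is also frac (g (Min V))\<close>
    then have sub: "T \<subseteq> frac ` g ` V" using g(2) unfolding face_coords_def by auto
    have "card T \<le> card (frac ` g ` V)" using sub V(1) by (simp add: card_mono)
    also have "\<dots> \<le> card (g ` V)" using V(1) by (simp add: card_image_le)
    also have "\<dots> \<le> card V" using V(1) by (simp add: card_image_le)
    finally have "card T \<le> card V" .
    moreover have "finite T" using sub V(1) finite_subset by blast
    moreover have "0 \<in> T" using zero_in_frac_face_coords[of V n g, OF V assms(3) g1] g(2) by simp
    moreover have "T \<subseteq> {0..<1}" using g(2) by (auto simp: frac_lt_1)
    ultimately show "T \<in> ?R" by blast
  next
    fix T :: "real set" assume "T \<in> ?R"
    then have T: "T \<subseteq> {0..<1}" "0 \<in> T" "finite T" "card T \<le> card V" by auto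
    define U where "U = insert 1 (T - {0})"
    have U: "finite U" "U \<noteq> {}" "U \<subseteq> {0..1}" "1 \<in> U" using T(1,3) unfolding U_def by auto
    have "card U \<le> card T"
    proof -
      have "card U \<le> Suc (card (T - {0}))" unfolding U_def using T(3) by (simp add: card_insert_if)
      moreover have "card (T - {0}) = card T - 1" "0 < card T"
        using T(2,3) by (auto simp: card_gt_0_iff)
      ultimately show ?thesis by linarith
    qed
    then obtain g where g: "antimono_on V g" "g ` V = U"
      using antimono_on_onto[of V U] V U T(4) \<open>card U \<le> card T\<close> by fastforce
    have gV: "g k \<in> {0..1}" if "k \<in> V" for k using that g(2) U(3) by blast
    obtain k where k: "k \<in> V" "g k = 1" using g(2) U(4) by (metis imageE)
    have "g k \<le> g (Min V)" using monotone_onD[OF g(1) MinV(1) k(1)] MinV(2) k(1) by simp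
    then have g1: "g (Min V) = 1" using k(2) gV[OF MinV(1)] by simp
    have prof: "g \<in> tail_profiles V"
      using g(1) g1 gV unfolding tail_profiles_def by simp
    have "frac ` face_coords n V g = T"
    proof (rule frac_image_between[OF T(1,2)])
      show "T - {0} \<subseteq> face_coords n V g"
      proof
        fix x assume x: "x \<in> T - {0}"
        then have "x \<in> g ` V" using g(2) unfolding U_def by simp
        then obtain j where j: "j \<in> V" "g j = x" by blast
        have "x \<noteq> 1" using x T(1) by auto
        have "Min V \<noteq> j" using g1 j(2) \<open>x \<noteq> 1\<close> by auto
        then have "j \<noteq> 0" using MinV(2) j(1) by (metis le_zero_eq)
        then show "x \<in> face_coords n V g" using j unfolding face_coords_def by blast
      qed
      have "g ` (V - {0}) \<subseteq> U" using g(2) by (metis Diff_subset image_mono)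
      then have "g ` (V - {0}) \<subseteq> insert 1 T" unfolding U_def by blast
      then show "face_coords n V g \<subseteq> insert 1 T"
        using T(2) unfolding face_coords_def by auto
      show "0 \<in> frac ` face_coords n V g" using zero_in_frac_face_coords[of V n g, OF V assms(3) g1] .
    qed
    then show "T \<in> (\<lambda>g. frac ` face_coords n V g) ` tail_profiles V" using prof by blast
  qed
qed

theorem lemma10p1:
  fixes n :: nat and V V' :: "nat set"
  assumes "n \<ge> 1"
    and "is_face n V" and "is_face n V'"
    and "card V = card V'"
  shows "(extremal n V \<and> extremal n V' \<longrightarrow>
            qmap n ` face_points V = qmap n ` face_points V')
       \<and> (\<not> extremal n V \<and> \<not> extremal n V' \<longrightarrow>
            qmap n ` face_points V = qmap n ` face_points V')"
proof (intro conjI impI)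
  assume "extremal n V \<and> extremal n V'"
  then show "qmap n ` face_points V = qmap n ` face_points V'"
    using qmap_extremal_face[OF assms(2,1)] qmap_extremal_face[OF assms(3,1)] assms(4) by simp
next
  assume "\<not> extremal n V \<and> \<not> extremal n V'"
  then show "qmap n ` face_points V = qmap n ` face_points V'"
    using qmap_nonextremal_face[OF assms(2,1)] qmap_nonextremal_face[OF assms(3,1)] assms(4)
    by simp
qed

end
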